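(* Suppose the path decomposition $P_0,\dots,P_k$ of $G$ is well defined (i.e. the uniqueness assumptions below hold). Then there is an index $i_0\le k$ such that $f(P_0)>f(P_1)>\dots>f(P_{i_0})>0=f(P_{i_0+1})=\dots=f(P_k)$.
   Context: Let $G=(N,E)$ be a finite connected undirected graph with distinct vertices $s_0,s_1$ and edge lengths $L_e>0$; the length $L(P)$ of a path is the sum of its edge lengths, and $\operatorname{dist}(v,s_1)$ is the shortest-path distance. Path decomposition: $P_0$ is the shortest $s_0$-$s_1$ path (assumed unique), $f(P_0)=1$, and $p^*_v=\operatorname{dist}(v,s_1)$ for $v\in P_0$. Inductively, for $i\ge1$, as long as some edge does not belong to $P_0\cup\dots\cup P_{i-1}$, let $\mathcal P$ be the set of paths $P$ in $G$ whose startpoint $a$ and endpoint $b$ lie on $P_0\cup\dots\cup P_{i-1}$ with $p^*_a\ge p^*_b$, none of whose interior vertices lies on $P_0\cup\dots\cup P_{i-1}$, and none of whose edges belongs to $P_0\cup\dots\cup P_{i-1}$; for such $P$ set $f(P)=(p^*_a-p^*_b)/L(P)$. Let $P_i=\arg\max_{P\in\mathcal P}f(P)$ (assumed unique unless the maximum value is $0$). If $p^*_a>p^*_b$, $P_i$ is directed from $a$ to $b$; otherwise its edges stay undirected. For every interior vertex $v$ of $P_i$ set $p^*_v=p^*_b+f(P_i)\operatorname{dist}_{P_i}(v,b)$, where $\operatorname{dist}_{P_i}$ is distance along $P_i$; for edges $e$ of $P_i$ set $r_e=f(P_i)-1$ (and $r_e=0$ for $e\in P_0$). The process stops with $P_k$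 when all edges are covered. *)

theory Defs
  imports Main "HOL-Library.Multiset" Complex_Main
begin

definition wf_graph :: "'v set \<Rightarrow> 'e set \<Rightarrow> ('e \<Rightarrow> 'v set) \<Rightarrow> ('e \<Rightarrow> real) \<Rightarrow> bool" where
  "wf_graph N E ends L \<longleftrightarrow> finite N \<and> finite E \<and>
     (\<forall>e\<in>E. (\<exists>u v. u \<noteq> v \<and> ends e = {u, v}) \<and> ends e \<subseteq> N \<and> L e > 0)"

definition is_walk :: "'e set \<Rightarrow> ('e \<Rightarrow> 'v set) \<Rightarrow> 'v list \<Rightarrow> 'e list \<Rightarrow> bool" where
  "is_walk E ends vs es \<longleftrightarrow> length vs = Suc (length es) \<and>
     (\<forall>i < length es. es ! i \<in> E \<and> ends (es ! i) = {vs ! i, vs ! Suc i})"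

definition connected_graph :: "'v set \<Rightarrow> 'e set \<Rightarrow> ('e \<Rightarrow> 'v set) \<Rightarrow> bool" where
  "connected_graph N E ends \<longleftrightarrow>
     (\<forall>u\<in>N. \<forall>v\<in>N. \<exists>vs es. is_walk E ends vs es \<and> hd vs = u \<and> last vs = v)"

definition is_path :: "'e set \<Rightarrow> ('e \<Rightarrow> 'v set) \<Rightarrow> 'v list \<Rightarrow> 'e list \<Rightarrow> bool" where
  "is_path E ends vs es \<longleftrightarrow> is_walk E ends vs es \<and> es \<noteq> [] \<and> distinct es \<and>
     (distinct vs \<or> (distinct (tl vs) \<and> hd vs = last vs))"

definition plen :: "('e \<Rightarrow> real) \<Rightarrow> 'e list \<Rightarrow> real" where
  "plen L es = sum_list (map L es)"

definition gdist :: "'e set \<Rightarrow> ('e \<Rightarrow> 'v set) \<Rightarrow> ('e \<Rightarrow> real) \<Rightarrow> 'v \<Rightarrow> 'v \<Rightarrow> real" where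
  "gdist E ends L u v = Inf {plen L es | vs es. is_walk E ends vs es \<and> hd vs = u \<and> last vs = v}"

definition fval :: "('e \<Rightarrow> real) \<Rightarrow> ('v \<Rightarrow> real) \<Rightarrow> 'v list \<times> 'e list \<Rightarrow> real" where
  "fval L p P = (p (hd (fst P)) - p (last (fst P))) / plen L (snd P)"

definition covV :: "(nat \<Rightarrow> 'v list \<times> 'e list) \<Rightarrow> nat \<Rightarrow> 'v set" where
  "covV P i = (\<Union>j<i. set (fst (P j)))"

definition covE :: "(nat \<Rightarrow> 'v list \<times> 'e list) \<Rightarrow> nat \<Rightarrow> 'e set" where
  "covE P i = (\<Union>j<i. set (snd (P j)))"

definition cands :: "'e set \<Rightarrow> ('e \<Rightarrow> 'v set) \<Rightarrow> ('v \<Rightarrow> real) \<Rightarrow> (nat \<Rightarrow> 'v list \<times> 'e list)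
                     \<Rightarrow> nat \<Rightarrow> ('v list \<times> 'e list) set" where
  "cands E ends p P i = {(vs, es). is_path E ends vs es \<and>
      hd vs \<in> covV P i \<and> last vs \<in> covV P i \<and> p (hd vs) \<ge> p (last vs) \<and>
      (\<forall>j. 0 < j \<and> j < length es \<longrightarrow> vs ! j \<notin> covV P i) \<and>
      set es \<inter> covE P i = {}}"

text \<open>P_0,...,P_k is a well-defined path decomposition, with potential p
  (p v is the value p^*_v assigned during the process).\<close>
definition path_decomp :: "'v set \<Rightarrow> 'e set \<Rightarrow> ('e \<Rightarrow> 'v set) \<Rightarrow> ('e \<Rightarrow> real) \<Rightarrow> 'v \<Rightarrow> 'v \<Rightarrow>
      nat \<Rightarrow> (nat \<Rightarrow> 'v list \<times> 'e list) \<Rightarrow> ('v \<Rightarrow> real) \<Rightarrow> bool" where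
  "path_decomp N E ends L s0 s1 k P p \<longleftrightarrow>
     \<comment> \<open>P_0 is the unique shortest s0-s1 path\<close>
     (is_path E ends (fst (P 0)) (snd (P 0)) \<and> distinct (fst (P 0)) \<and>
      hd (fst (P 0)) = s0 \<and> last (fst (P 0)) = s1 \<and>
      plen L (snd (P 0)) = gdist E ends L s0 s1 \<and>
      (\<forall>vs es. is_path E ends vs es \<and> hd vs = s0 \<and> last vs = s1 \<and>
          plen L es = gdist E ends L s0 s1 \<longrightarrow> (vs, es) = P 0) \<and>
      (\<forall>v\<in>set (fst (P 0)). p v = gdist E ends L v s1)) \<and>
     \<comment> \<open>inductive steps\<close>
     (\<forall>i. 1 \<le> i \<and> i \<le> k \<longrightarrow>
        E - covE P i \<noteq> {} \<and>
        P i \<in> cands E ends p P i \<and>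
        (\<forall>Q\<in>cands E ends p P i. fval L p Q \<le> fval L p (P i)) \<and>
        (fval L p (P i) \<noteq> 0 \<longrightarrow>
           (\<forall>Q\<in>cands E ends p P i. fval L p Q = fval L p (P i) \<longrightarrow> Q = P i)) \<and>
        (\<forall>j. 0 < j \<and> j < length (snd (P i)) \<longrightarrow>
           p (fst (P i) ! j) = p (last (fst (P i))) +
              fval L p (P i) * plen L (drop j (snd (P i))))) \<and>
     \<comment> \<open>the process stops with P_k: all edges covered\<close>
     E \<subseteq> covE P (Suc k)"

end

theory Submission
  imports Defs
begin

text \<open>
  Write F i for f(P_i).  Along every path P_i the potential p decreases linearly with
  slope F i (for P_0 this is the shortest-path property, for i \<ge> 1 it is the defining
  interpolation).  The heart of the proof is a splicing argument: if F i \<le> F (i+1) and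
  F (i+1) > 0, then walking along P_i up to the start of P_(i+1), then along P_(i+1), then
  along P_i again from the end of P_(i+1) yields a path C that drops the potential by at
  least F i * L(C).  For i = 0, C is an s0-s1 path no longer than P_0, hence equal to P_0
  by uniqueness of the shortest path; for i \<ge> 1, C is a candidate at step i with
  f(C) \<ge> F i > 0, hence equal to P_i by uniqueness of the maximiser.  Both are absurd since
  C contains the edges of P_(i+1), which are disjoint from those of P_i.  Thus F strictly
  decreases while positive, and once zero it stays zero, which is the theorem.
\<close>

subsection \<open>Lengths of edge lists\<close>

lemma plen_Nil [simp]: "plen L [] = 0"
  by (simp add: plen_def)

lemma plen_Cons [simp]: "plen L (x # xs) = L x + plen L xs"
  by (simp add: plen_def)

lemma plen_append [simp]: "plen L (xs @ ys) = plen L xs + plen L ys"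
  by (simp add: plen_def)

lemma plen_nonneg: "\<forall>e\<in>set es. L e > 0 \<Longrightarrow> plen L es \<ge> 0"
  by (induct es) (auto simp: less_imp_le)

lemma plen_pos: "\<forall>e\<in>set es. L e > 0 \<Longrightarrow> es \<noteq> [] \<Longrightarrow> plen L es > 0"
proof (induct es)
  case (Cons a es)
  then show ?case using plen_nonneg[of es L] by (simp add: add_pos_nonneg)
qed simp

lemma plen_take_drop: "plen L es = plen L (take m es) + plen L (drop m es)"
  by (metis append_take_drop_id plen_append)

lemma plen_drop_mono:
  assumes "\<forall>e\<in>set es. L e > 0" and "m \<le> m'"
  shows "plen L (drop m' es) \<le> plen L (drop m es)"
proof -
  have "drop m' es = drop (m' - m) (drop m es)" using assms(2) by simp
  then have "plen L (drop m es) = plen L (take (m' - m) (drop m es)) + plen L (drop m' es)"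
    by (metis plen_take_drop)
  moreover have "plen L (take (m' - m) (drop m es)) \<ge> 0"
    using assms(1) by (intro plen_nonneg) (meson in_set_dropD in_set_takeD)
  ultimately show ?thesis by linarith
qed

lemma plen_drop_pos: "\<forall>e\<in>set es. L e > 0 \<Longrightarrow> m < length es \<Longrightarrow> plen L (drop m es) > 0"
  by (intro plen_pos) (auto dest: in_set_dropD)

lemma plen_drop_less:
  assumes "\<forall>e\<in>set es. L e > 0" and "0 < m" and "es \<noteq> []"
  shows "plen L (drop m es) < plen L es"
proof -
  have "plen L (take m es) > 0" using assms by (intro plen_pos) (auto dest: in_set_takeD)
  then show ?thesis using plen_take_drop[of L es m] by linarith
qed

subsection \<open>Walks and paths\<close>

lemma in_set_take_nth: "v \<in> set (take n xs) \<Longrightarrow> \<exists>m<n. m < length xs \<and> v = xs ! m"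
  by (auto simp: in_set_conv_nth)

lemma in_set_drop_nth: "v \<in> set (drop n xs) \<Longrightarrow> \<exists>m\<ge>n. m < length xs \<and> v = xs ! m"
  by (auto simp: in_set_conv_nth) (metis le_add1 less_diff_conv add.commute)

lemma walk_edges: "is_walk E ends vs es \<Longrightarrow> set es \<subseteq> E"
  by (auto simp: is_walk_def in_set_conv_nth)

lemma walk_length: "is_walk E ends vs es \<Longrightarrow> length vs = Suc (length es)"
  by (simp add: is_walk_def)

lemma walk_ne: "is_walk E ends vs es \<Longrightarrow> vs \<noteq> []"
  by (auto simp: is_walk_def)

lemma walk_hd: "is_walk E ends vs es \<Longrightarrow> hd vs = vs ! 0"
  by (metis hd_conv_nth walk_ne)

lemma walk_last: "is_walk E ends vs es \<Longrightarrow> last vs = vs ! length es"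
  by (metis diff_Suc_1 last_conv_nth walk_length walk_ne)

lemma walk_take:
  "is_walk E ends vs es \<Longrightarrow> j \<le> length es \<Longrightarrow> is_walk E ends (take (Suc j) vs) (take j es)"
  by (auto simp: is_walk_def)

lemma walk_drop:
  "is_walk E ends vs es \<Longrightarrow> j \<le> length es \<Longrightarrow> is_walk E ends (drop j vs) (drop j es)"
  by (auto simp: is_walk_def add.commute)

lemma hd_butlast_append:
  "xs \<noteq> [] \<Longrightarrow> ys \<noteq> [] \<Longrightarrow> last xs = hd ys \<Longrightarrow> hd (butlast xs @ ys) = hd xs"
  by (induct xs) auto

lemma walk_append:
  assumes w1: "is_walk E ends vs1 es1" and w2: "is_walk E ends vs2 es2"
    and join: "last vs1 = hd vs2"
  shows "is_walk E ends (butlast vs1 @ vs2) (es1 @ es2)"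
proof -
  have lb: "length (butlast vs1) = length es1" using walk_length[OF w1] by simp
  have jn: "vs1 ! length es1 = vs2 ! 0" using join walk_last[OF w1] walk_hd[OF w2] by simp
  have vert: "(butlast vs1 @ vs2) ! n = (if n \<le> length es1 then vs1 ! n else vs2 ! (n - length es1))"
    for n using lb jn by (auto simp: nth_append nth_butlast)
  show ?thesis
    unfolding is_walk_def
  proof (intro conjI allI impI)
    show "length (butlast vs1 @ vs2) = Suc (length (es1 @ es2))"
      using lb walk_length[OF w2] by simp
  next
    fix n assume n: "n < length (es1 @ es2)"
    show "(es1 @ es2) ! n \<in> E"
      using nth_mem[OF n] walk_edges[OF w1] walk_edges[OF w2] by auto
    show "ends ((es1 @ es2) ! n) = {(butlast vs1 @ vs2) ! n, (butlast vs1 @ vs2) ! Suc n}"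
    proof (cases "n < length es1")
      case True
      then show ?thesis using w1 n vert[of n] vert[of "Suc n"] by (simp add: is_walk_def nth_append)
    next
      case False
      then have "n - length es1 < length es2" "Suc n - length es1 = Suc (n - length es1)"
        using n by auto
      then show ?thesis using w2 n False jn vert[of n] vert[of "Suc n"]
        by (simp add: is_walk_def nth_append)
    qed
  qed
qed

lemma walk_distinct_edges:
  assumes w: "is_walk E ends vs es" and d: "distinct vs"
  shows "distinct es"
  unfolding distinct_conv_nth
proof (intro allI impI)
  fix i j assume i: "i < length es" and j: "j < length es" and ij: "i \<noteq> j"
  show "es ! i \<noteq> es ! j"
  proof
    assume "es ! i = es ! j"
    then have "{vs ! i, vs ! Suc i} = {vs ! j, vs ! Suc j}" using w i j unfolding is_walk_def by metis
    then have "vs ! i = vs ! j \<and> vs ! Suc i = vs ! Suc j \<or> vs ! i = vs ! Suc j \<and> vs ! Suc i = vs ! j"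
      by (auto simp: doubleton_eq_iff)
    then show False using d walk_length[OF w] i j ij by (auto simp: nth_eq_iff_index_eq)
  qed
qed

lemma path_walk: "is_path E ends vs es \<Longrightarrow> is_walk E ends vs es"
  by (simp add: is_path_def)

lemma path_open_distinct: "is_path E ends vs es \<Longrightarrow> hd vs \<noteq> last vs \<Longrightarrow> distinct vs"
  by (auto simp: is_path_def)

lemma path_distinct_butlast:
  assumes pa: "is_path E ends vs es"
  shows "distinct (take (length es) vs)"
proof (cases "distinct vs")
  case False
  then have dt: "distinct (tl vs)" and hl: "hd vs = last vs" using pa by (auto simp: is_path_def)
  have l: "length vs = Suc (length es)" and ne: "es \<noteq> []"
    using pa by (auto simp: is_path_def is_walk_def)
  obtain x ys where vs: "vs = x # ys" and ly: "length ys = length es"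
    using l by (cases vs) auto
  then have yne: "ys \<noteq> []" using ne by auto
  then have x: "x = last ys" using hl vs by simp
  have "take (length es) vs = x # butlast ys" using vs ly yne ne
    by (simp add: butlast_conv_take take_Cons')
  moreover have "distinct (butlast ys) \<and> last ys \<notin> set (butlast ys)" using dt vs yne
    by (metis append_butlast_last_id distinct_append list.sel(3) disjoint_iff list.set_intros(1))
  ultimately show ?thesis using x by simp
qed simp

lemma path_distinct_drop:
  "is_path E ends vs es \<Longrightarrow> 0 < j \<Longrightarrow> distinct (drop j vs)"
  by (metis Suc_pred distinct_drop drop_Suc is_path_def)

subsection \<open>Shortest-path distance\<close>

lemma gdist_le_plen:
  assumes pos: "\<forall>e\<in>E. L e > 0" and w: "is_walk E ends vs es"
  shows "gdist E ends L (hd vs) (last vs) \<le> plen L es"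
  unfolding gdist_def
proof (rule cInf_lower)
  show "bdd_below {plen L es |vs' es. is_walk E ends vs' es \<and> hd vs' = hd vs \<and> last vs' = last vs}"
    using pos by (intro bdd_belowI[of _ 0]) (auto intro!: plen_nonneg dest!: walk_edges)
qed (use w in blast)

lemma gdist_triangle:
  assumes pos: "\<forall>e\<in>E. L e > 0"
    and w: "is_walk E ends vs es" and w2: "is_walk E ends ws fs" and join: "hd ws = last vs"
  shows "gdist E ends L (hd vs) (last ws) \<le> plen L es + gdist E ends L (hd ws) (last ws)"
proof -
  let ?S = "{plen L es |vs' es. is_walk E ends vs' es \<and> hd vs' = hd ws \<and> last vs' = last ws}"
  have "gdist E ends L (hd vs) (last ws) - plen L es \<le> Inf ?S"
  proof (rule cInf_greatest)
    show "?S \<noteq> {}" using w2 by blast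
    fix x assume "x \<in> ?S"
    then obtain vs' es' where x: "x = plen L es'" and w': "is_walk E ends vs' es'"
      and h: "hd vs' = hd ws" and l: "last vs' = last ws" by blast
    have wa: "is_walk E ends (butlast vs @ vs') (es @ es')"
      using walk_append[OF w w'] h join by simp
    have "hd (butlast vs @ vs') = hd vs" "last (butlast vs @ vs') = last ws"
      using hd_butlast_append[of vs vs'] walk_ne[OF w] walk_ne[OF w'] h join l by auto
    then show "gdist E ends L (hd vs) (last ws) - plen L es \<le> x"
      using gdist_le_plen[OF pos wa] x by simp
  qed
  then show ?thesis unfolding gdist_def by linarith
qed

subsection \<open>Splicing three walks\<close>

text \<open>This is how a steeper path is built out of pieces of two consecutive paths.\<close>

lemma splice_path:
  fixes p :: "'v \<Rightarrow> real"
  assumes wp: "is_walk E ends pv pe" and wq: "is_walk E ends qv qe" and ws: "is_walk E ends sv se"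
    and j1: "last pv = hd qv" and j2: "last qv = hd sv" and qne: "qe \<noteq> []"
    and dp: "distinct pv" and dq: "distinct qv" and ds: "distinct sv"
    and pv_above: "\<forall>v\<in>set pv. p (hd qv) \<le> p v"
    and qv_below_start: "\<forall>v\<in>set (tl qv). p v < p (hd qv)"
    and qv_above_end: "\<forall>v\<in>set (butlast qv). p (last qv) < p v"
    and sv_below: "\<forall>v\<in>set sv. p v \<le> p (last qv)"
  shows "is_path E ends (butlast pv @ butlast qv @ sv) (pe @ qe @ se)"
    "hd (butlast pv @ butlast qv @ sv) = hd pv" "last (butlast pv @ butlast qv @ sv) = last sv"
proof -
  have pne: "pv \<noteq> []" and qvne: "qv \<noteq> []" and sne: "sv \<noteq> []" using wp wq ws walk_ne by blast+
  have w1: "is_walk E ends (butlast qv @ sv) (qe @ se)" by (rule walk_append[OF wq ws j2])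
  have h1: "hd (butlast qv @ sv) = hd qv" using hd_butlast_append[OF qvne sne j2] .
  have w2: "is_walk E ends (butlast pv @ butlast qv @ sv) (pe @ qe @ se)"
    using walk_append[OF wp w1] j1 h1 by simp
  show "hd (butlast pv @ butlast qv @ sv) = hd pv"
    using hd_butlast_append[OF pne] j1 h1 sne by simp
  show "last (butlast pv @ butlast qv @ sv) = last sv" using sne by simp
  have "hd qv \<in> set (butlast qv)" using walk_length[OF wq] qne by (cases qv) auto
  then have drop_q: "p (last qv) < p (hd qv)" using qv_above_end by blast
  have d1: "set (butlast qv) \<inter> set sv = {}"
    using qv_above_end sv_below by fastforce
  have last_pv: "last pv \<notin> set (butlast pv)" using dp pne
    by (metis append_butlast_last_id distinct_append disjoint_iff list.set_intros(1))
  have d2: "x \<notin> set (butlast qv @ sv)" if xp: "x \<in> set (butlast pv)" for x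
  proof
    assume xq: "x \<in> set (butlast qv @ sv)"
    have "x \<noteq> hd qv" using xp last_pv j1 by auto
    moreover have "x \<in> set qv \<or> x \<in> set sv" using xq by (auto dest: in_set_butlastD)
    ultimately have "x \<in> set (tl qv) \<or> x \<in> set sv" using qvne by (cases qv) auto
    moreover have "p (hd qv) \<le> p x" using pv_above xp by (auto dest: in_set_butlastD)
    ultimately show False using qv_below_start sv_below drop_q by fastforce
  qed
  have "distinct (butlast pv @ butlast qv @ sv)"
    using d1 d2 dp dq ds by (auto simp: distinct_butlast)
  then show "is_path E ends (butlast pv @ butlast qv @ sv) (pe @ qe @ se)"
    unfolding is_path_def using w2 walk_distinct_edges[OF w2] qne by simp
qed

subsection \<open>Candidate paths\<close>

lemma cands_D:
  assumes "Q \<in> cands E ends p P i"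
  shows "is_path E ends (fst Q) (snd Q)" "hd (fst Q) \<in> covV P i" "last (fst Q) \<in> covV P i"
    "p (last (fst Q)) \<le> p (hd (fst Q))"
    "\<And>j. 0 < j \<Longrightarrow> j < length (snd Q) \<Longrightarrow> fst Q ! j \<notin> covV P i"
    "set (snd Q) \<inter> covE P i = {}"
  using assms by (cases Q; simp add: cands_def)+

lemma cands_covered_vertex:
  assumes Q: "(vs, es) \<in> cands E ends p P i" and v: "v \<in> set vs" "v \<in> covV P i"
  shows "v = hd vs \<or> v = last vs"
proof -
  have w: "is_walk E ends vs es" using cands_D(1)[OF Q] by (simp add: is_path_def)
  obtain m where m: "m < length vs" "v = vs ! m" using v(1) by (auto simp: in_set_conv_nth)
  show ?thesis
  proof (cases "m = 0 \<or> m = length es")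
    case True
    then show ?thesis using m walk_hd[OF w] walk_last[OF w] by auto
  next
    case False
    then show ?thesis using cands_D(5)[OF Q, of m] m v(2) walk_length[OF w] by simp
  qed
qed

lemma cands_intro:
  assumes pa: "is_path E ends vs es"
    and ends_cov: "hd vs \<in> covV P i" "last vs \<in> covV P i"
    and pot: "p (last vs) \<le> p (hd vs)" and open_path: "hd vs \<noteq> last vs"
    and only_ends: "\<forall>v\<in>set vs. v \<in> covV P i \<longrightarrow> v = hd vs \<or> v = last vs"
    and new_edges: "set es \<inter> covE P i = {}"
  shows "(vs, es) \<in> cands E ends p P i"
proof -
  have w: "is_walk E ends vs es" using pa by (rule path_walk)
  have d: "distinct vs" using path_open_distinct[OF pa open_path] .
  have "vs ! j \<notin> covV P i" if j: "0 < j" "j < length es" for j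
  proof
    assume "vs ! j \<in> covV P i"
    then have "vs ! j = vs ! 0 \<or> vs ! j = vs ! length es"
      using only_ends j walk_hd[OF w] walk_last[OF w] walk_length[OF w] by simp
    then show False using d j walk_length[OF w] by (auto simp: nth_eq_iff_index_eq)
  qed
  then show ?thesis using assms unfolding cands_def by blast
qed

lemma covV_Suc: "covV P (Suc i) = covV P i \<union> set (fst (P i))"
  by (auto simp: covV_def lessThan_Suc)

lemma covE_Suc: "covE P (Suc i) = covE P i \<union> set (snd (P i))"
  by (auto simp: covE_def lessThan_Suc)

lemma covV_0 [simp]: "covV P 0 = {}"
  by (simp add: covV_def)

subsection \<open>A fixed path decomposition\<close>

locale path_decomposition =
  fixes N :: "'v set" and E :: "'e set" and ends :: "'e \<Rightarrow> 'v set" and L :: "'e \<Rightarrow> real"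
    and s0 s1 :: 'v and k :: nat and P :: "nat \<Rightarrow> 'v list \<times> 'e list" and p :: "'v \<Rightarrow> real"
  assumes wf: "wf_graph N E ends L" and decomp: "path_decomp N E ends L s0 s1 k P p"
begin

abbreviation VS :: "nat \<Rightarrow> 'v list" where "VS i \<equiv> fst (P i)"
abbreviation ES :: "nat \<Rightarrow> 'e list" where "ES i \<equiv> snd (P i)"
abbreviation F :: "nat \<Rightarrow> real" where "F i \<equiv> fval L p (P i)"

lemma L_pos: "\<forall>e\<in>E. L e > 0"
  using wf by (auto simp: wf_graph_def)

lemma P0: "is_path E ends (VS 0) (ES 0)" "distinct (VS 0)" "hd (VS 0) = s0"
  "last (VS 0) = s1" "plen L (ES 0) = gdist E ends L s0 s1"
  "\<And>vs es. is_path E ends vs es \<Longrightarrow> hd vs = s0 \<Longrightarrow> last vs = s1 \<Longrightarrow>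
     plen L es = gdist E ends L s0 s1 \<Longrightarrow> (vs, es) = P 0"
  "\<And>v. v \<in> set (VS 0) \<Longrightarrow> p v = gdist E ends L v s1"
  using decomp unfolding path_decomp_def by blast+

lemma Pi: assumes "1 \<le> i" "i \<le> k"
  shows "P i \<in> cands E ends p P i"
    "\<And>Q. Q \<in> cands E ends p P i \<Longrightarrow> fval L p Q \<le> F i"
    "\<And>Q. F i \<noteq> 0 \<Longrightarrow> Q \<in> cands E ends p P i \<Longrightarrow> fval L p Q = F i \<Longrightarrow> Q = P i"
    "\<And>j. 0 < j \<Longrightarrow> j < length (ES i) \<Longrightarrow>
       p (VS i ! j) = p (last (VS i)) + F i * plen L (drop j (ES i))"
  using decomp assms unfolding path_decomp_def by blast+

lemma path_P: "i \<le> k \<Longrightarrow> is_path E ends (VS i) (ES i)"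
  using P0(1) cands_D(1)[OF Pi(1)] by (cases i) auto

lemma walk_P: "i \<le> k \<Longrightarrow> is_walk E ends (VS i) (ES i)"
  by (rule path_walk[OF path_P])

lemma edges_pos: "i \<le> k \<Longrightarrow> \<forall>e\<in>set (ES i). L e > 0"
  using walk_edges[OF walk_P] L_pos by blast

lemma ES_ne: "i \<le> k \<Longrightarrow> ES i \<noteq> []"
  using path_P unfolding is_path_def by blast

lemma plen_P_pos: "i \<le> k \<Longrightarrow> plen L (ES i) > 0"
  by (rule plen_pos[OF edges_pos ES_ne])

lemma length_VS: "i \<le> k \<Longrightarrow> length (VS i) = Suc (length (ES i))"
  by (rule walk_length[OF walk_P])

lemma hd_VS: "i \<le> k \<Longrightarrow> hd (VS i) = VS i ! 0"
  by (rule walk_hd[OF walk_P])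

lemma last_VS: "i \<le> k \<Longrightarrow> last (VS i) = VS i ! length (ES i)"
  by (rule walk_last[OF walk_P])

lemma ends_covered:
  assumes "1 \<le> i" "i \<le> k"
  shows "hd (VS i) \<in> covV P i" "last (VS i) \<in> covV P i"
  using cands_D(2,3)[OF Pi(1)[OF assms]] by auto

lemma interior_uncovered:
  "1 \<le> i \<Longrightarrow> i \<le> k \<Longrightarrow> 0 < j \<Longrightarrow> j < length (ES i) \<Longrightarrow> VS i ! j \<notin> covV P i"
  by (rule cands_D(5)[OF Pi(1)])

text \<open>On the shortest path P_0 the potential is the remaining length to s1: it is at most
  that length by definition of the distance and at least that by the triangle inequality,
  since P_0 itself is shortest.\<close>

lemma potential_P0:
  assumes j: "j \<le> length (ES 0)"
  shows "p (VS 0 ! j) = plen L (drop j (ES 0))"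
proof -
  have w: "is_walk E ends (VS 0) (ES 0)" by (rule walk_P) simp
  have jl: "j < length (VS 0)" using j length_VS[of 0] by simp
  have wd: "is_walk E ends (drop j (VS 0)) (drop j (ES 0))" using walk_drop[OF w j] .
  have hd: "hd (drop j (VS 0)) = VS 0 ! j" and ld: "last (drop j (VS 0)) = s1"
    using jl P0(4) by (simp_all add: hd_drop_conv_nth)
  have wt: "is_walk E ends (take (Suc j) (VS 0)) (take j (ES 0))" using walk_take[OF w j] .
  have "hd (take (Suc j) (VS 0)) = hd (VS 0)" by (cases "VS 0") simp_all
  then have ht: "hd (take (Suc j) (VS 0)) = s0" using P0(3) by simp
  have lt: "last (take (Suc j) (VS 0)) = VS 0 ! j" using jl by (simp add: take_Suc_conv_app_nth)
  have "p (VS 0 ! j) = gdist E ends L (VS 0 ! j) s1" using P0(7) jl by simp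
  moreover have "gdist E ends L (VS 0 ! j) s1 \<le> plen L (drop j (ES 0))"
    using gdist_le_plen[OF L_pos wd] hd ld by simp
  moreover have "gdist E ends L s0 s1 \<le> plen L (take j (ES 0)) + gdist E ends L (VS 0 ! j) s1"
    using gdist_triangle[OF L_pos wt wd] ht lt hd ld by simp
  ultimately show ?thesis using plen_take_drop[of L "ES 0" j] P0(5) by linarith
qed

lemma F0: "F 0 = 1"
proof -
  have "p (hd (VS 0)) = plen L (ES 0)" using potential_P0[of 0] hd_VS[of 0] by simp
  moreover have "p (last (VS 0)) = 0" using potential_P0[of "length (ES 0)"] last_VS[of 0] by simp
  ultimately show ?thesis using plen_P_pos[of 0] by (simp add: fval_def)
qed

lemma potential_linear:
  assumes i: "i \<le> k" and j: "j \<le> length (ES i)"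
  shows "p (VS i ! j) = p (last (VS i)) + F i * plen L (drop j (ES i))"
proof (cases "i = 0")
  case True
  then show ?thesis
    using potential_P0[OF j[unfolded True]] potential_P0[of "length (ES 0)"] last_VS[of 0] F0
    by simp
next
  case False
  consider "j = 0" | "j = length (ES i)" | "0 < j" "j < length (ES i)" using j by linarith
  then show ?thesis
  proof cases
    case 1
    then show ?thesis using plen_P_pos[OF i] hd_VS[OF i] by (simp add: fval_def)
  next
    case 2
    then show ?thesis using last_VS[OF i] by simp
  next
    case 3
    then show ?thesis using Pi(4)[OF _ i] False by simp
  qed
qed

lemma F_nonneg: "i \<le> k \<Longrightarrow> 0 \<le> F i"
  using F0 cands_D(4)[OF Pi(1)] plen_P_pos
  by (cases "i = 0") (auto simp: fval_def intro!: divide_nonneg_pos)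

lemma potential_antimono:
  assumes i: "i \<le> k" and "m \<le> j" and j: "j \<le> length (ES i)"
  shows "p (VS i ! j) \<le> p (VS i ! m)"
proof -
  have "F i * plen L (drop j (ES i)) \<le> F i * plen L (drop m (ES i))"
    using plen_drop_mono[OF edges_pos[OF i] \<open>m \<le> j\<close>] F_nonneg[OF i] by (rule mult_left_mono)
  then show ?thesis using potential_linear[OF i j] potential_linear[OF i, of m] assms by simp
qed

lemma steep_path:
  assumes i: "i \<le> k" and pos: "0 < F i"
  shows "\<forall>v\<in>set (tl (VS i)). p v < p (hd (VS i))"
    "\<forall>v\<in>set (butlast (VS i)). p (last (VS i)) < p v"
    "distinct (VS i)"
proof -
  show below_start: "\<forall>v\<in>set (tl (VS i)). p v < p (hd (VS i))"
  proof
    fix v assume "v \<in> set (tl (VS i))"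
    then obtain m where "m < length (ES i)" "v = VS i ! Suc m"
      using length_VS[OF i] by (auto simp: in_set_conv_nth nth_tl)
    then have m: "Suc m \<le> length (ES i)" "v = VS i ! Suc m" by simp_all
    have "plen L (drop (Suc m) (ES i)) < plen L (ES i)"
      by (rule plen_drop_less[OF edges_pos[OF i] _ ES_ne[OF i]]) simp
    then show "p v < p (hd (VS i))"
      using m potential_linear[OF i m(1)] potential_linear[OF i, of 0] hd_VS[OF i] pos by simp
  qed
  show above_end: "\<forall>v\<in>set (butlast (VS i)). p (last (VS i)) < p v"
  proof
    fix v assume "v \<in> set (butlast (VS i))"
    then obtain m where m: "m < length (ES i)" "v = VS i ! m"
      using length_VS[OF i] by (auto simp: in_set_conv_nth nth_butlast)
    then show "p (last (VS i)) < p v"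
      using potential_linear[OF i, of m] plen_drop_pos[OF edges_pos[OF i] m(1)] pos by simp
  qed
  have "hd (VS i) \<in> set (butlast (VS i))"
    using length_VS[OF i] ES_ne[OF i] by (cases "VS i") auto
  then have "p (last (VS i)) < p (hd (VS i))" using above_end by blast
  then have "hd (VS i) \<noteq> last (VS i)" by auto
  then show "distinct (VS i)" using path_open_distinct[OF path_P[OF i]] by blast
qed

lemma prefix_piece:
  assumes i: "i \<le> k" and j: "j \<le> length (ES i)" and inner: "1 \<le> i \<Longrightarrow> j < length (ES i)"
  defines "pv \<equiv> take (Suc j) (VS i)" and "pe \<equiv> take j (ES i)"
  shows "is_walk E ends pv pe" "last pv = VS i ! j" "distinct pv"
    "\<forall>v\<in>set pv. p (VS i ! j) \<le> p v" "p (hd pv) - p (VS i ! j) = F i * plen L pe"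
    "set pe \<subseteq> set (ES i)" "\<forall>v\<in>set pv. v \<in> covV P i \<longrightarrow> v = hd pv"
proof -
  have jl: "j < length (VS i)" using j length_VS[OF i] by simp
  have hd_pv: "hd pv = VS i ! 0" unfolding pv_def using hd_VS[OF i] by (cases "VS i") simp_all
  have idx: "\<exists>m\<le>j. v = VS i ! m" if "v \<in> set pv" for v
    using in_set_take_nth[OF that[unfolded pv_def]] by (auto simp: less_Suc_eq_le)
  show "is_walk E ends pv pe" unfolding pv_def pe_def by (rule walk_take[OF walk_P[OF i] j])
  show "last pv = VS i ! j" unfolding pv_def using jl by (simp add: take_Suc_conv_app_nth)
  show "set pe \<subseteq> set (ES i)" unfolding pe_def by (rule set_take_subset)
  show "distinct pv"
  proof (cases "i = 0")
    case True
    then show ?thesis unfolding pv_def using P0(2) by simp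
  next
    case False
    then have "pv = take (Suc j) (take (length (ES i)) (VS i))"
      unfolding pv_def using inner by (simp add: min_def)
    moreover have "distinct (take (Suc j) (take (length (ES i)) (VS i)))"
      by (rule distinct_take[OF path_distinct_butlast[OF path_P[OF i]]])
    ultimately show ?thesis by (simp only:)
  qed
  show "\<forall>v\<in>set pv. p (VS i ! j) \<le> p v"
    using idx potential_antimono[OF i _ j] by blast
  show "p (hd pv) - p (VS i ! j) = F i * plen L pe"
    using hd_pv potential_linear[OF i j] potential_linear[OF i, of 0] plen_take_drop[of L "ES i" j]
    unfolding pe_def by (simp add: algebra_simps)
  show "\<forall>v\<in>set pv. v \<in> covV P i \<longrightarrow> v = hd pv"
  proof (intro ballI impI)
    fix v assume v: "v \<in> set pv" "v \<in> covV P i"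
    then obtain m where m: "m \<le> j" "v = VS i ! m" using idx by blast
    have "i \<noteq> 0" using v(2) by (cases i) auto
    then have "m = 0" using interior_uncovered[OF _ i, of m] inner m v(2) by fastforce
    then show "v = hd pv" using m hd_pv by simp
  qed
qed

lemma suffix_piece:
  assumes i: "i \<le> k" and j: "j \<le> length (ES i)" and inner: "1 \<le> i \<Longrightarrow> 0 < j"
  defines "sv \<equiv> drop j (VS i)" and "se \<equiv> drop j (ES i)"
  shows "is_walk E ends sv se" "hd sv = VS i ! j" "last sv = last (VS i)" "distinct sv"
    "\<forall>v\<in>set sv. p v \<le> p (VS i ! j)" "p (VS i ! j) - p (last sv) = F i * plen L se"
    "set se \<subseteq> set (ES i)" "\<forall>v\<in>set sv. v \<in> covV P i \<longrightarrow> v = last sv"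
proof -
  have jl: "j < length (VS i)" using j length_VS[OF i] by simp
  have last_sv: "last sv = last (VS i)" unfolding sv_def using jl by simp
  have idx: "\<exists>m\<ge>j. m \<le> length (ES i) \<and> v = VS i ! m" if "v \<in> set sv" for v
    using in_set_drop_nth[OF that[unfolded sv_def]] length_VS[OF i] by auto
  show "is_walk E ends sv se" unfolding sv_def se_def by (rule walk_drop[OF walk_P[OF i] j])
  show "hd sv = VS i ! j" unfolding sv_def using jl by (simp add: hd_drop_conv_nth)
  show "last sv = last (VS i)" by (rule last_sv)
  show "set se \<subseteq> set (ES i)" unfolding se_def by (rule set_drop_subset)
  show "distinct sv"
    using P0(2) path_distinct_drop[OF path_P[OF i]] inner unfolding sv_def
    by (cases "i = 0") auto
  show "\<forall>v\<in>set sv. p v \<le> p (VS i ! j)"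
    using idx potential_antimono[OF i] by blast
  show "p (VS i ! j) - p (last sv) = F i * plen L se"
    using last_sv potential_linear[OF i j] unfolding se_def by simp
  show "\<forall>v\<in>set sv. v \<in> covV P i \<longrightarrow> v = last sv"
  proof (intro ballI impI)
    fix v assume v: "v \<in> set sv" "v \<in> covV P i"
    then obtain m where m: "j \<le> m" "m \<le> length (ES i)" "v = VS i ! m" using idx by blast
    have "i \<noteq> 0" using v(2) by (cases i) auto
    then have "m = length (ES i)" using interior_uncovered[OF _ i, of m] inner m v(2) by fastforce
    then show "v = last sv" using m last_sv last_VS[OF i] by simp
  qed
qed

lemma entry_piece:
  assumes i: "i \<le> k" and a: "a \<in> covV P (Suc i)"
  obtains pv pe where "is_walk E ends pv pe" "last pv = a" "distinct pv"
    "\<forall>v\<in>set pv. p a \<le> p v" "p (hd pv) - p a = F i * plen L pe" "set pe \<subseteq> set (ES i)"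
    "\<forall>v\<in>set pv. v \<in> covV P i \<longrightarrow> v = hd pv"
    "1 \<le> i \<Longrightarrow> hd pv \<in> covV P i" "i = 0 \<Longrightarrow> hd pv = s0"
proof (cases "1 \<le> i \<and> a \<in> covV P i")
  case True
  show ?thesis by (rule that[of "[a]" "[]"]) (use True in \<open>auto simp: is_walk_def\<close>)
next
  case False
  then have "a \<in> set (VS i)" using a by (cases i) (auto simp: covV_Suc)
  then obtain j where j: "j \<le> length (ES i)" "a = VS i ! j"
    using length_VS[OF i] by (auto simp: in_set_conv_nth less_Suc_eq_le)
  have inner: "j < length (ES i)" if "1 \<le> i"
    using False that j ends_covered(2)[OF that i] last_VS[OF i] by (cases "j = length (ES i)") auto
  note piece = prefix_piece[OF i j(1) inner]
  have hd_pv: "hd (take (Suc j) (VS i)) = hd (VS i)" by (cases "VS i") simp_all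
  show ?thesis
    by (rule that[OF piece(1)]) (use piece j hd_pv ends_covered(1)[OF _ i] P0(3) in auto)
qed

lemma exit_piece:
  assumes i: "i \<le> k" and b: "b \<in> covV P (Suc i)"
  obtains sv se where "is_walk E ends sv se" "hd sv = b" "distinct sv"
    "\<forall>v\<in>set sv. p v \<le> p b" "p b - p (last sv) = F i * plen L se" "set se \<subseteq> set (ES i)"
    "\<forall>v\<in>set sv. v \<in> covV P i \<longrightarrow> v = last sv"
    "1 \<le> i \<Longrightarrow> last sv \<in> covV P i" "i = 0 \<Longrightarrow> last sv = s1"
proof (cases "1 \<le> i \<and> b \<in> covV P i")
  case True
  show ?thesis by (rule that[of "[b]" "[]"]) (use True in \<open>auto simp: is_walk_def\<close>)
next
  case False
  then have "b \<in> set (VS i)" using b by (cases i) (auto simp: covV_Suc)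
  then obtain j where j: "j \<le> length (ES i)" "b = VS i ! j"
    using length_VS[OF i] by (auto simp: in_set_conv_nth less_Suc_eq_le)
  have inner: "0 < j" if "1 \<le> i"
    using False that j ends_covered(1)[OF that i] hd_VS[OF i] by (cases "j = 0") auto
  note piece = suffix_piece[OF i j(1) inner]
  show ?thesis
    by (rule that[OF piece(1)]) (use piece j ends_covered(2)[OF _ i] P0(4) in auto)
qed

lemma shortest_path_unique:
  assumes pa: "is_path E ends vs es" and ends: "hd vs = s0" "last vs = s1"
    and short: "plen L es \<le> p s0 - p s1"
  shows "(vs, es) = P 0"
proof -
  have "p s0 - p s1 = plen L (ES 0)"
    using F0 potential_linear[of 0 0] hd_VS[of 0] P0(3,4) by simp
  moreover have "gdist E ends L s0 s1 \<le> plen L es"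
    using gdist_le_plen[OF L_pos path_walk[OF pa]] ends by simp
  ultimately show ?thesis using P0(5,6) pa ends short by simp
qed

text \<open>A candidate at step i \<ge> 1 that drops the potential by at least F i times its length,
  and by a positive amount, is P_i: it is a maximiser of f with positive value.\<close>

lemma steepest_candidate_unique:
  assumes i: "1 \<le> i" "i \<le> k" and Q: "Q \<in> cands E ends p P i"
    and steep: "F i * plen L (snd Q) \<le> p (hd (fst Q)) - p (last (fst Q))"
    and pos: "0 < p (hd (fst Q)) - p (last (fst Q))"
  shows "Q = P i"
proof -
  have pa: "is_path E ends (fst Q) (snd Q)" by (rule cands_D(1)[OF Q])
  have "plen L (snd Q) > 0"
    using pa walk_edges[OF path_walk[OF pa]] L_pos by (intro plen_pos) (auto simp: is_path_def)
  then have "F i \<le> fval L p Q" and "0 < fval L p Q"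
    using steep pos by (simp_all add: fval_def pos_le_divide_eq)
  moreover have "fval L p Q \<le> F i" by (rule Pi(2)[OF i Q])
  ultimately have "fval L p Q = F i" and "F i \<noteq> 0" by simp_all
  then show ?thesis using Pi(3)[OF i _ Q] by blast
qed

text \<open>P_(i+1) has an edge outside P_i, since its edges are not yet covered.\<close>

lemma next_path_new_edges:
  assumes "i < k"
  shows "\<not> set (ES (Suc i)) \<subseteq> set (ES i)"
proof -
  have "set (ES (Suc i)) \<inter> covE P (Suc i) = {}"
    by (rule cands_D(6)[OF Pi(1)]) (use assms in simp_all)
  then show ?thesis using ES_ne[of "Suc i"] assms by (auto simp: covE_Suc neq_Nil_conv)
qed

lemma splice_candidate:
  fixes pv sv :: "'v list" and pe se :: "'e list"
  assumes i1: "1 \<le> i" and ik: "i < k"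
  defines "cv \<equiv> butlast pv @ butlast (VS (Suc i)) @ sv" and "ce \<equiv> pe @ ES (Suc i) @ se"
  assumes pa: "is_path E ends cv ce" and ends: "hd cv = hd pv" "last cv = last sv"
    and descent: "p (last sv) < p (hd pv)"
    and pv: "pv \<noteq> []" "last pv = hd (VS (Suc i))" "set pe \<subseteq> set (ES i)"
      "\<forall>v\<in>set pv. v \<in> covV P i \<longrightarrow> v = hd pv" "hd pv \<in> covV P i"
    and sv: "sv \<noteq> []" "hd sv = last (VS (Suc i))" "set se \<subseteq> set (ES i)"
      "\<forall>v\<in>set sv. v \<in> covV P i \<longrightarrow> v = last sv" "last sv \<in> covV P i"
  shows "(cv, ce) \<in> cands E ends p P i"
proof (rule cands_intro[OF pa])
  let ?qv = "VS (Suc i)" and ?qe = "ES (Suc i)"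
  have i: "i \<le> k" and sk: "Suc i \<le> k" using ik by simp_all
  have cq: "(?qv, ?qe) \<in> cands E ends p P (Suc i)" using Pi(1)[OF _ sk] by simp
  show "hd cv \<in> covV P i" "last cv \<in> covV P i" using ends pv(5) sv(5) by simp_all
  show "p (last cv) \<le> p (hd cv)" "hd cv \<noteq> last cv" using descent ends by auto
  show "\<forall>v\<in>set cv. v \<in> covV P i \<longrightarrow> v = hd cv \<or> v = last cv"
  proof (intro ballI impI)
    fix v assume v: "v \<in> set cv" "v \<in> covV P i"
    have "hd ?qv \<in> set pv" "last ?qv \<in> set sv"
      using pv(1,2) sv(1,2) last_in_set[of pv] hd_in_set[of sv] by simp_all
    moreover have "v \<in> set pv \<or> v \<in> set ?qv \<or> v \<in> set sv"
      using v(1) unfolding cv_def by (auto dest: in_set_butlastD)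
    moreover have "v = hd ?qv \<or> v = last ?qv" if "v \<in> set ?qv"
      using cands_covered_vertex[OF cq that] v(2) by (simp add: covV_Suc)
    ultimately have "v \<in> set pv \<or> v \<in> set sv" by blast
    then show "v = hd cv \<or> v = last cv" using pv(4) sv(4) ends v(2) by auto
  qed
  have "set (ES i) \<inter> covE P i = {}" "set ?qe \<inter> covE P (Suc i) = {}"
    using cands_D(6)[OF Pi(1)[OF i1 i]] cands_D(6)[OF cq] by simp_all
  then show "set ce \<inter> covE P i = {}"
    using pv(3) sv(3) unfolding ce_def covE_Suc by auto
qed

lemma improving_path:
  assumes ik: "i < k" and le: "F i \<le> F (Suc i)" and pos: "0 < F (Suc i)"
  obtains cv ce where "is_path E ends cv ce" "set (ES (Suc i)) \<subseteq> set ce"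
    "F i * plen L ce \<le> p (hd cv) - p (last cv)" "0 < p (hd cv) - p (last cv)"
    "i = 0 \<Longrightarrow> hd cv = s0 \<and> last cv = s1"
    "1 \<le> i \<Longrightarrow> (cv, ce) \<in> cands E ends p P i"
proof -
  have i: "i \<le> k" and sk: "Suc i \<le> k" using ik by simp_all
  let ?qv = "VS (Suc i)" and ?qe = "ES (Suc i)"
  have cq: "(?qv, ?qe) \<in> cands E ends p P (Suc i)" using Pi(1)[OF _ sk] by simp
  have q_drop: "p (hd ?qv) - p (last ?qv) = F (Suc i) * plen L ?qe"
    using plen_P_pos[OF sk] by (simp add: fval_def)
  note steep = steep_path[OF sk pos]
  obtain pv pe where pv: "is_walk E ends pv pe" "last pv = hd ?qv" "distinct pv"
    "\<forall>v\<in>set pv. p (hd ?qv) \<le> p v" "p (hd pv) - p (hd ?qv) = F i * plen L pe"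
    "set pe \<subseteq> set (ES i)" "\<forall>v\<in>set pv. v \<in> covV P i \<longrightarrow> v = hd pv"
    "1 \<le> i \<Longrightarrow> hd pv \<in> covV P i" "i = 0 \<Longrightarrow> hd pv = s0"
    using entry_piece[OF i cands_D(2)[OF cq]] by (metis fst_conv)
  obtain sv se where sv: "is_walk E ends sv se" "hd sv = last ?qv" "distinct sv"
    "\<forall>v\<in>set sv. p v \<le> p (last ?qv)" "p (last ?qv) - p (last sv) = F i * plen L se"
    "set se \<subseteq> set (ES i)" "\<forall>v\<in>set sv. v \<in> covV P i \<longrightarrow> v = last sv"
    "1 \<le> i \<Longrightarrow> last sv \<in> covV P i" "i = 0 \<Longrightarrow> last sv = s1"
    using exit_piece[OF i cands_D(3)[OF cq]] by (metis fst_conv)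
  define cv where "cv = butlast pv @ butlast ?qv @ sv"
  define ce where "ce = pe @ ?qe @ se"
  note splice = splice_path[OF pv(1) walk_P[OF sk] sv(1) pv(2) sv(2)[symmetric] ES_ne[OF sk]
      pv(3) steep(3) sv(3) pv(4) steep(1) steep(2) sv(4), folded cv_def ce_def]
  have drop: "p (hd cv) - p (last cv) = F i * plen L pe + F (Suc i) * plen L ?qe + F i * plen L se"
    using splice(2,3) pv(5) q_drop sv(5) by simp
  have "0 \<le> plen L pe" "0 \<le> plen L se"
    using walk_edges[OF pv(1)] walk_edges[OF sv(1)] L_pos by (auto intro!: plen_nonneg)
  then have nonneg: "0 \<le> F i * plen L pe" "0 \<le> F i * plen L se"
    using F_nonneg[OF i] by simp_all
  show ?thesis
  proof (rule that[OF splice(1)])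
    show "set ?qe \<subseteq> set ce" unfolding ce_def by auto
    show "F i * plen L ce \<le> p (hd cv) - p (last cv)"
      using drop mult_right_mono[OF le less_imp_le[OF plen_P_pos[OF sk]]] unfolding ce_def
      by (simp add: distrib_left)
    show drop_pos: "0 < p (hd cv) - p (last cv)"
      using drop nonneg pos plen_P_pos[OF sk] by (simp add: add_nonneg_pos add_pos_nonneg)
    show "i = 0 \<Longrightarrow> hd cv = s0 \<and> last cv = s1" using splice(2,3) pv(9) sv(9) by simp
    have descent: "p (last sv) < p (hd pv)" using drop_pos splice(2,3) by simp
    show "(cv, ce) \<in> cands E ends p P i" if "1 \<le> i"
      using splice_candidate[OF that ik splice(1,2,3)[unfolded cv_def ce_def] descent
          walk_ne[OF pv(1)] pv(2,6,7) pv(8)[OF that] walk_ne[OF sv(1)] sv(2,6,7) sv(8)[OF that]]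
      unfolding cv_def ce_def .
  qed
qed

lemma slope_decreases:
  assumes ik: "i < k" and pos: "0 < F (Suc i)"
  shows "F (Suc i) < F i"
proof (rule ccontr)
  assume "\<not> F (Suc i) < F i"
  then have le: "F i \<le> F (Suc i)" by simp
  obtain cv ce where C: "is_path E ends cv ce" "set (ES (Suc i)) \<subseteq> set ce"
    "F i * plen L ce \<le> p (hd cv) - p (last cv)" "0 < p (hd cv) - p (last cv)"
    "i = 0 \<Longrightarrow> hd cv = s0 \<and> last cv = s1" "1 \<le> i \<Longrightarrow> (cv, ce) \<in> cands E ends p P i"
    using improving_path[OF ik le pos] by blast
  have "(cv, ce) = P i"
  proof (cases "i = 0")
    case True
    then show ?thesis using shortest_path_unique[OF C(1)] C(3,5) F0 by simp
  next
    case False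
    then show ?thesis using steepest_candidate_unique[OF _ _ C(6)] C(3,4) ik by simp
  qed
  then show False using C(2) next_path_new_edges[OF ik] by (metis snd_conv)
qed

lemma slope_zero_persists:
  assumes "m \<le> n" "n \<le> k" "F m = 0"
  shows "F n = 0"
  using assms
proof (induction n rule: dec_induct)
  case (step n)
  then have "n < k" "F n = 0" by simp_all
  then have "\<not> 0 < F (Suc n)" using slope_decreases[of n] by fastforce
  then show ?case using F_nonneg[of "Suc n"] step.prems(1) by simp
qed simp

end

text \<open>The main theorem: i0 is the last index with positive slope.\<close>

theorem mainTheorem13:
  fixes N :: "'v set" and E :: "'e set" and ends :: "'e \<Rightarrow> 'v set" and L :: "'e \<Rightarrow> real"
    and s0 s1 :: 'v and k :: nat and P :: "nat \<Rightarrow> 'v list \<times> 'e list" and p :: "'v \<Rightarrow> real"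
  assumes "wf_graph N E ends L" and "connected_graph N E ends"
    and "s0 \<in> N" and "s1 \<in> N" and "s0 \<noteq> s1"
    and "path_decomp N E ends L s0 s1 k P p"
  shows "\<exists>i0\<le>k. (\<forall>i<i0. fval L p (P i) > fval L p (P (Suc i))) \<and>
                 fval L p (P i0) > 0 \<and>
                 (\<forall>i. i0 < i \<and> i \<le> k \<longrightarrow> fval L p (P i) = 0)"
proof -
  interpret path_decomposition N E ends L s0 s1 k P p
    using assms(1,6) by unfold_locales
  define S where "S = {i. i \<le> k \<and> 0 < F i}"
  have fin: "finite S" and "0 \<in> S" unfolding S_def using F0 by simp_all
  then have i0: "Max S \<in> S" by (intro Max_in) auto
  have above: "\<And>j. j \<in> S \<Longrightarrow> j \<le> Max S" using fin by simp
  have positive_before: "0 < F i" if "i \<le> Max S" for i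
  proof (rule ccontr)
    assume "\<not> 0 < F i"
    then have "F i = 0" using F_nonneg[of i] that i0 unfolding S_def by simp
    then show False using slope_zero_persists[OF that] i0 unfolding S_def by simp
  qed
  have "F (Suc i) < F i" if "i < Max S" for i
    using that i0 positive_before[of "Suc i"] slope_decreases[of i] unfolding S_def by simp
  moreover have "F i = 0" if "Max S < i" "i \<le> k" for i
  proof -
    have "i \<notin> S" using above[of i] that(1) by linarith
    then show ?thesis using that(2) F_nonneg[of i] unfolding S_def by simp
  qed
  ultimately show ?thesis using i0 unfolding S_def by blast
qed

end
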